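(* There exist deterministic multi-robot transition systems $S$ and $\widehat{S}$ and an integer $m$ such that $\widehat{S}$ is an $m$-illusion of $S$, but there is no $\tau$ for which $\widehat{S}$ is an $(m,\tau)$-illusion of $S$.
   Context: A deterministic multi-robot transition system is a 7-tuple $(n,X,U,f,Y,h,x_0)$ where $n$ is a positive integer (the number of robots); $X=X^{(1)}\times\cdots\times X^{(n)}$ is the state space; $U=U^{(1)}\times\cdots\times U^{(n)}$ is the action space; $f:X\times U\to X$ is the transition function given by robot transition functions $f^{(i)}$ via $f(x,(u^{(1)},\dots,u^{(n)}))=(f^{(1)}(x,u^{(1)}),\dots,f^{(n)}(x,u^{(n)}))$; $Y=Y^{(1)}\times\cdots\times Y^{(n)}$ is the observation space; $h:X\to Y$ is given by robot observation functions via $h(x)=(h^{(1)}(x),\dots,h^{(n)}(x))$; and $x_0\in X$ is the initial state. The system evolves in discrete time by $x_{k+1}=f(x_k,u_k)$, $y_k=h(x_k)$. When a primary system $\widehat{S}$ (hatted quantities) emulates a secondary system $S$, a robot policy $\widehat{\pi}^{(i)}$ for robot $i$ of $\widehat{S}$ maps robot $i$'s own action history $\widehat{u}^{(i)}_0,\dots,\widehat{u}^{(i)}_k$, its observation history $\widehat{y}^{(i)}_0,\dots,\widehat{y}^{(i)}_k$, and the state history $x_0,\dots,x_\ell$ of the secondary system (with $\ell$ possibly different from $k$) to an action $\widehat{u}^{(i)}_k$. Robot policies in $S$ choose actions from histories in the same manner. For systems $S$ and $\widehat{S}$ and an integer $0<m\le n$, $\widehat{S}$ is an $m$-illusion of $S$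 if there exist (i) robot policies $\widehat{\pi}^{(1)},\dots,\widehat{\pi}^{(\widehat{n})}$ in $\widehat{S}$, (ii) a strictly increasing function $z:\mathbb{Z}^+\to\mathbb{Z}^+$, and (iii) an infinite sequence of functions $\rho_k:\{1,\dots,m\}\to\{1,\dots,\widehat{n}\}$, such that for any robot policies $\pi^{(1)},\dots,\pi^{(n)}$ in $S$, for all $k\ge0$ and all $1\le i\le m$, $h^{(i)}(x_k)=\widehat{h}^{(\rho_k(i))}(\widehat{x}_{z(k)})$. The tuple $(\widehat{\pi},(\rho_k),z)$ is a witness. $\widehat{S}$ is an $(m,\tau)$-illusion of $S$ if it is an $m$-illusion with a witness for which the sequence $z(2)-z(1),z(3)-z(2),\dots$ is bounded above by $\tau$. *)

theory Defs
  imports "HOL-Library.FuncSet"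
begin

text \<open>Robots are indexed by 1..nrob.
  A joint state is a function from robot indices to component states, extensional
  (i.e. in PiE {1..n} X) so that it is an element of X = X(1) x ... x X(n).\<close>

record ('x, 'u, 'y) mrts =
  nrob :: nat
  Xs   :: "nat \<Rightarrow> 'x set"
  Us   :: "nat \<Rightarrow> 'u set"
  fs   :: "nat \<Rightarrow> (nat \<Rightarrow> 'x) \<Rightarrow> 'u \<Rightarrow> 'x"
  Ys   :: "nat \<Rightarrow> 'y set"
  hs   :: "nat \<Rightarrow> (nat \<Rightarrow> 'x) \<Rightarrow> 'y"
  init :: "nat \<Rightarrow> 'x"

definition wf_mrts :: "('x, 'u, 'y) mrts \<Rightarrow> bool" where
  "wf_mrts S \<longleftrightarrow> 0 < nrob S
     \<and> init S \<in> PiE {1..nrob S} (Xs S)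
     \<and> (\<forall>i\<in>{1..nrob S}. \<forall>x\<in>PiE {1..nrob S} (Xs S). \<forall>u\<in>Us S i. fs S i x u \<in> Xs S i)
     \<and> (\<forall>i\<in>{1..nrob S}. \<forall>x\<in>PiE {1..nrob S} (Xs S). hs S i x \<in> Ys S i)"

definition step :: "('x, 'u, 'y) mrts \<Rightarrow> (nat \<Rightarrow> 'x) \<Rightarrow> (nat \<Rightarrow> 'u) \<Rightarrow> (nat \<Rightarrow> 'x)" where
  "step S x u = (\<lambda>i. if i \<in> {1..nrob S} then fs S i x (u i) else undefined)"

text \<open>Robot policies of a (secondary) system: robot i maps its own past actions
  u_0..u_{k-1} and its observations y_0..y_k to the action u_k.\<close>
type_synonym ('u, 'y) policy = "nat \<Rightarrow> 'u list \<Rightarrow> 'y list \<Rightarrow> 'u"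

definition valid_policy :: "('x, 'u, 'y) mrts \<Rightarrow> ('u, 'y) policy \<Rightarrow> bool" where
  "valid_policy S \<pi> \<longleftrightarrow> (\<forall>i\<in>{1..nrob S}. \<forall>us ys. \<pi> i us ys \<in> Us S i)"

fun hist :: "('x, 'u, 'y) mrts \<Rightarrow> ('u, 'y) policy \<Rightarrow> nat \<Rightarrow> (nat \<Rightarrow> 'x) list \<times> (nat \<Rightarrow> 'u) list" where
  "hist S \<pi> 0 = ([init S], [])"
| "hist S \<pi> (Suc k) =
     (let (xs, us) = hist S \<pi> k;
          u = (\<lambda>i. \<pi> i (map (\<lambda>v. v i) us) (map (hs S i) xs))
      in (xs @ [step S (last xs) u], us @ [u]))"

definition traj :: "('x, 'u, 'y) mrts \<Rightarrow> ('u, 'y) policy \<Rightarrow> nat \<Rightarrow> (nat \<Rightarrow> 'x)" where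
  "traj S \<pi> k = last (fst (hist S \<pi> k))"

text \<open>Robot policies of the primary system: robot i maps its own past actions,
  its observations y_0..y_k and the state history x_0..x_l of the secondary system
  to its action.\<close>
type_synonym ('u, 'y, 'xs) ppolicy = "nat \<Rightarrow> 'u list \<Rightarrow> 'y list \<Rightarrow> (nat \<Rightarrow> 'xs) list \<Rightarrow> 'u"

definition valid_ppolicy :: "('x, 'u, 'y) mrts \<Rightarrow> ('u, 'y, 'xs) ppolicy \<Rightarrow> bool" where
  "valid_ppolicy S \<pi> \<longleftrightarrow> (\<forall>i\<in>{1..nrob S}. \<forall>us ys xs. \<pi> i us ys xs \<in> Us S i)"

text \<open>Primary closed loop, given the secondary state sequence sec and the function L
  saying that at primary time j the secondary history x_0..x_(L j) is available.\<close>
fun phist :: "('x, 'u, 'y) mrts \<Rightarrow> ('u, 'y, 'xs) ppolicy \<Rightarrow> (nat \<Rightarrow> (nat \<Rightarrow> 'xs)) \<Rightarrow> (nat \<Rightarrow> nat)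
      \<Rightarrow> nat \<Rightarrow> (nat \<Rightarrow> 'x) list \<times> (nat \<Rightarrow> 'u) list" where
  "phist S \<pi> sec L 0 = ([init S], [])"
| "phist S \<pi> sec L (Suc k) =
     (let (xs, us) = phist S \<pi> sec L k;
          u = (\<lambda>i. \<pi> i (map (\<lambda>v. v i) us) (map (hs S i) xs) (map sec [0..<Suc (L k)]))
      in (xs @ [step S (last xs) u], us @ [u]))"

definition ptraj :: "('x, 'u, 'y) mrts \<Rightarrow> ('u, 'y, 'xs) ppolicy \<Rightarrow> (nat \<Rightarrow> (nat \<Rightarrow> 'xs)) \<Rightarrow> (nat \<Rightarrow> nat)
      \<Rightarrow> nat \<Rightarrow> (nat \<Rightarrow> 'x)" where
  "ptraj S \<pi> sec L j = last (fst (phist S \<pi> sec L j))"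

text \<open>Information pattern: at primary time j the primary robots know the secondary
  states x_0 .. x_l, where l = #{k. z k \<le> j}, i.e. up to the next state to be emulated.\<close>
definition info_len :: "(nat \<Rightarrow> nat) \<Rightarrow> nat \<Rightarrow> nat" where
  "info_len z j = card {k. z k \<le> j}"

definition illusion_witness ::
  "('x, 'u, 'y) mrts \<Rightarrow> ('x2, 'u2, 'y) mrts \<Rightarrow> nat \<Rightarrow> ('u2, 'y, 'x) ppolicy
     \<Rightarrow> (nat \<Rightarrow> nat \<Rightarrow> nat) \<Rightarrow> (nat \<Rightarrow> nat) \<Rightarrow> bool" where
  "illusion_witness S Sh m \<pi>h \<rho> z \<longleftrightarrow>
     valid_ppolicy Sh \<pi>h \<and> strict_mono z
     \<and> (\<forall>k. \<rho> k \<in> {1..m} \<rightarrow> {1..nrob Sh})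
     \<and> (\<forall>\<pi>. valid_policy S \<pi> \<longrightarrow>
          (\<forall>k. \<forall>i\<in>{1..m}.
             hs S i (traj S \<pi> k)
               = hs Sh (\<rho> k i) (ptraj Sh \<pi>h (traj S \<pi>) (info_len z) (z k))))"

definition is_illusion :: "('x, 'u, 'y) mrts \<Rightarrow> ('x2, 'u2, 'y) mrts \<Rightarrow> nat \<Rightarrow> bool" where
  "is_illusion S Sh m \<longleftrightarrow> 0 < m \<and> m \<le> nrob S \<and> (\<exists>\<pi>h \<rho> z. illusion_witness S Sh m \<pi>h \<rho> z)"

definition is_tau_illusion :: "('x, 'u, 'y) mrts \<Rightarrow> ('x2, 'u2, 'y) mrts \<Rightarrow> nat \<Rightarrow> nat \<Rightarrow> bool" where
  "is_tau_illusion S Sh m \<tau> \<longleftrightarrow> 0 < m \<and> m \<le> nrob S \<and>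
     (\<exists>\<pi>h \<rho> z. illusion_witness S Sh m \<pi>h \<rho> z \<and> (\<forall>k\<ge>1. z (Suc k) - z k \<le> \<tau>))"

end

theory Submission
  imports Defs
begin

text \<open>Take for both systems a single robot that observes its own state and ignores its
  actions, its state evolving by \<open>x \<mapsto> 2x + 1\<close> in the secondary system and by
  \<open>x \<mapsto> x + 1\<close> in the primary one. The primary state at time \<open>j\<close> is \<open>j\<close>, so the
  observation \<open>2\<^sup>k - 1\<close> of the secondary system at time \<open>k\<close> can only be reproduced at
  primary time \<open>z k = 2\<^sup>k - 1\<close>. This emulation works, but it is also the only one, and
  its gaps \<open>z (k + 1) - z k = 2\<^sup>k\<close> are unbounded.\<close>

definition autonomous_robot :: "(nat \<Rightarrow> nat) \<Rightarrow> nat \<Rightarrow> (nat, nat, nat) mrts" where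
  "autonomous_robot g x0 =
     \<lparr>nrob = 1, Xs = (\<lambda>_. UNIV), Us = (\<lambda>_. {0}), fs = (\<lambda>i x u. g (x i)),
      Ys = (\<lambda>_. UNIV), hs = (\<lambda>i x. x i), init = (\<lambda>i. if i = 1 then x0 else undefined)\<rparr>"

lemma autonomous_robot_sel [simp]:
  "nrob (autonomous_robot g x0) = 1"
  "Us (autonomous_robot g x0) i = {0}"
  "hs (autonomous_robot g x0) i x = x i"
  by (simp_all add: autonomous_robot_def)

lemma wf_autonomous_robot: "wf_mrts (autonomous_robot g x0)"
  by (auto simp: wf_mrts_def autonomous_robot_def PiE_def extensional_def)

lemma traj_Suc_step: "\<exists>u. traj S \<pi> (Suc k) = step S (traj S \<pi> k) u"
  unfolding traj_def by (cases "hist S \<pi> k") (auto simp: Let_def)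

lemma ptraj_Suc_step: "\<exists>u. ptraj S \<pi> sec L (Suc j) = step S (ptraj S \<pi> sec L j) u"
  unfolding ptraj_def by (cases "phist S \<pi> sec L j") (auto simp: Let_def)

text \<open>The robot index is written \<open>Suc 0\<close>: this is the form in which the simplifier
  leaves the index \<open>1\<close> of the robot ranging over \<open>{1..1}\<close>.\<close>
lemma traj_autonomous_robot [simp]: "traj (autonomous_robot g x0) \<pi> k (Suc 0) = (g ^^ k) x0"
proof (induction k)
  case 0
  then show ?case by (simp add: traj_def autonomous_robot_def)
next
  case (Suc k)
  obtain u where "traj (autonomous_robot g x0) \<pi> (Suc k)
      = step (autonomous_robot g x0) (traj (autonomous_robot g x0) \<pi> k) u"
    using traj_Suc_step by blast
  with Suc show ?case by (simp add: step_def autonomous_robot_def)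
qed

lemma ptraj_autonomous_robot [simp]:
  "ptraj (autonomous_robot g x0) \<pi> sec L j (Suc 0) = (g ^^ j) x0"
proof (induction j)
  case 0
  then show ?case by (simp add: ptraj_def autonomous_robot_def)
next
  case (Suc j)
  obtain u where "ptraj (autonomous_robot g x0) \<pi> sec L (Suc j)
      = step (autonomous_robot g x0) (ptraj (autonomous_robot g x0) \<pi> sec L j) u"
    using ptraj_Suc_step by blast
  with Suc show ?case by (simp add: step_def autonomous_robot_def)
qed

lemma funpow_Suc_0 [simp]: "(Suc ^^ j) 0 = j"
  by (induction j) simp_all

lemma funpow_double_plus_one_0: "((\<lambda>n. 2 * n + 1) ^^ k) (0::nat) = 2 ^ k - 1"
proof -
  have "((\<lambda>n. 2 * n + 1) ^^ k) (0::nat) + 1 = 2 ^ k"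
    by (induction k) simp_all
  then show ?thesis by simp
qed

lemma strict_mono_funpow_orbit:
  fixes g :: "nat \<Rightarrow> nat"
  assumes "\<And>n. n < g n"
  shows "strict_mono (\<lambda>k. (g ^^ k) x0)"
  unfolding strict_mono_Suc_iff using assms by simp

lemma illusion_witness_autonomous_robot:
  assumes "strict_mono (\<lambda>k. (g ^^ k) x0)"
  shows "illusion_witness (autonomous_robot g x0) (autonomous_robot Suc 0) 1
           (\<lambda>_ _ _ _. 0) (\<lambda>_ _. 1) (\<lambda>k. (g ^^ k) x0)"
  using assms by (simp add: illusion_witness_def valid_ppolicy_def)

lemma illusion_witness_autonomous_robot_schedule:
  assumes "illusion_witness (autonomous_robot g x0) (autonomous_robot Suc 0) 1 \<pi>h \<rho> z"
  shows "z k = (g ^^ k) x0"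
proof -
  let ?\<pi> = "\<lambda>(_::nat) (_::nat list) (_::nat list). 0::nat"
  have "valid_policy (autonomous_robot g x0) ?\<pi>"
    by (simp add: valid_policy_def)
  with assms have "hs (autonomous_robot g x0) 1 (traj (autonomous_robot g x0) ?\<pi> k)
      = hs (autonomous_robot Suc 0) (\<rho> k 1)
          (ptraj (autonomous_robot Suc 0) \<pi>h (traj (autonomous_robot g x0) ?\<pi>) (info_len z) (z k))"
    unfolding illusion_witness_def by simp
  moreover have "\<rho> k 1 = 1"
    using assms by (auto simp: illusion_witness_def Pi_def)
  ultimately show ?thesis
    by simp
qed

theorem theorem4:
  shows "\<exists>(S :: (nat, nat, nat) mrts) (Sh :: (nat, nat, nat) mrts) (m :: nat).
           wf_mrts S \<and> wf_mrts Sh \<and> is_illusion S Sh m \<and> \<not> (\<exists>\<tau>. is_tau_illusion S Sh m \<tau>)"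
proof -
  let ?S = "autonomous_robot (\<lambda>n. 2 * n + 1) 0" and ?Sh = "autonomous_robot Suc 0"
  have "strict_mono (\<lambda>k. ((\<lambda>n. 2 * n + 1) ^^ k) (0::nat))"
    by (rule strict_mono_funpow_orbit) simp
  then have "is_illusion ?S ?Sh 1"
    unfolding is_illusion_def using illusion_witness_autonomous_robot by fastforce
  moreover have "\<not> is_tau_illusion ?S ?Sh 1 \<tau>" for \<tau>
  proof
    assume "is_tau_illusion ?S ?Sh 1 \<tau>"
    then obtain \<pi>h \<rho> z where witness: "illusion_witness ?S ?Sh 1 \<pi>h \<rho> z"
      and gaps: "\<forall>k\<ge>1. z (Suc k) - z k \<le> \<tau>"
      unfolding is_tau_illusion_def by blast
    have z: "z k = 2 ^ k - 1" for k
      using illusion_witness_autonomous_robot_schedule[OF witness] funpow_double_plus_one_0 by simp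
    have "2 ^ Suc \<tau> = z (Suc (Suc \<tau>)) - z (Suc \<tau>)"
      by (simp add: z)
    also have "\<dots> \<le> \<tau>"
      using gaps by simp
    finally show False
      using less_exp[of \<tau>] by simp
  qed
  ultimately show ?thesis
    using wf_autonomous_robot by blast
qed

end
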